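(* Assume $\lambda^*/n\to0$, $\lambda^*\to\infty$, that $\lambda_j/\lambda^*\to\lambda^0_j$ and $\sqrt{\lambda^*}/\lambda_j\to\psi_j$ for all $j$, and that $\lambda^0\in(0,1]^p$ and $\psi\in[0,\infty)^p$. Then for every $d>1$, $$\lim_{n\to\infty}\inf_{\beta\in\mathbb{R}^p}P_\beta\Big(\beta\in\hat\beta_{AL}-\sqrt{\tfrac{\lambda^*}{n}}\,\mathcal{M}_d\Big)=1,$$ where $\mathcal{M}_d=\mathcal{M}(d\lambda^0,\psi)$.
   Context: For each $n\ge p$: linear regression model $y=X\beta+\varepsilon$ with $y\in\mathbb{R}^n$, non-stochastic $X\in\mathbb{R}^{n\times p}$ ($p$ fixed) of full column rank, unknown $\beta\in\mathbb{R}^p$, and $\varepsilon$ with i.i.d. components of mean zero and finite variance $\sigma^2>0$; $P_\beta$ is the probability when the true parameter is $\beta$. $X'X/n\to C$ positive definite, and $\sqrt{n}(X'X)^{-1}X'\varepsilon\overset{d}{\longrightarrow}N(0,\sigma^2C^{-1})$. $\hat\beta_{LS}=(X'X)^{-1}X'y$; the events $\{\hat\beta_{LS,j}=0\}$ have probability zero and are excluded. Positive tuning parameters $\lambda_j=\lambda_{n,j}$, $\lambda^*=\max_j\lambda_j$. Adaptive Lasso: $\hat\beta_{AL}=\arg\min_{b\in\mathbb{R}^p}\big(\|y-Xb\|^2+2\sum_{j=1}^p\lambda_j|b_j|/|\hat\beta_{LS,j}|\big)$. For $\mu\in[0,\infty)^p$ and $\psi\in[0,\infty]^p$, $\mathcal{M}(\mu,\psi)=\{m\in\mathbb{R}^p:(Cm)_j=0\text{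 if }\psi_j=\infty,\ m_j(Cm)_j\le\mu_j\text{ if }\psi_j<\infty\}$. For a set $S$ and scalar $c$, $\hat\beta_{AL}-cS=\{\hat\beta_{AL}-cs:s\in S\}$. *)

theory Defs
  imports "HOL-Probability.Probability"
begin

text \<open>Design matrices: X n i j is entry (i,j) of the n x p matrix X_n (rows i < n),
  the column index j ranges over a finite type 'p with CARD('p) = p.\<close>

definition XtX :: "(nat \<Rightarrow> nat \<Rightarrow> 'p::finite \<Rightarrow> real) \<Rightarrow> nat \<Rightarrow> real^'p^'p" where
  "XtX X n = (\<chi> j k. \<Sum>i<n. X n i j * X n i k)"

definition Xt_mult :: "(nat \<Rightarrow> nat \<Rightarrow> 'p::finite \<Rightarrow> real) \<Rightarrow> nat \<Rightarrow> (nat \<Rightarrow> real) \<Rightarrow> real^'p" where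
  "Xt_mult X n y = (\<chi> j. \<Sum>i<n. X n i j * y i)"

definition X_mult :: "(nat \<Rightarrow> nat \<Rightarrow> 'p::finite \<Rightarrow> real) \<Rightarrow> nat \<Rightarrow> real^'p \<Rightarrow> nat \<Rightarrow> real" where
  "X_mult X n b i = (\<Sum>j\<in>UNIV. X n i j * b $ j)"

definition response :: "(nat \<Rightarrow> nat \<Rightarrow> 'p::finite \<Rightarrow> real) \<Rightarrow> nat \<Rightarrow> real^'p \<Rightarrow> (nat \<Rightarrow> real) \<Rightarrow> nat \<Rightarrow> real" where
  "response X n \<beta> eps i = X_mult X n \<beta> i + eps i"

definition beta_LS :: "(nat \<Rightarrow> nat \<Rightarrow> 'p::finite \<Rightarrow> real) \<Rightarrow> nat \<Rightarrow> (nat \<Rightarrow> real) \<Rightarrow> real^'p" where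
  "beta_LS X n y = matrix_inv (XtX X n) *v Xt_mult X n y"

definition AL_objective ::
  "(nat \<Rightarrow> nat \<Rightarrow> 'p::finite \<Rightarrow> real) \<Rightarrow> (nat \<Rightarrow> 'p \<Rightarrow> real) \<Rightarrow> nat \<Rightarrow> (nat \<Rightarrow> real) \<Rightarrow> real^'p \<Rightarrow> real" where
  "AL_objective X lam n y b =
     (\<Sum>i<n. (y i - X_mult X n b i)\<^sup>2)
     + 2 * (\<Sum>j\<in>UNIV. lam n j * \<bar>b $ j\<bar> / \<bar>beta_LS X n y $ j\<bar>)"

definition beta_AL ::
  "(nat \<Rightarrow> nat \<Rightarrow> 'p::finite \<Rightarrow> real) \<Rightarrow> (nat \<Rightarrow> 'p \<Rightarrow> real) \<Rightarrow> nat \<Rightarrow> (nat \<Rightarrow> real) \<Rightarrow> real^'p" where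
  "beta_AL X lam n y = (THE b. \<forall>b'. AL_objective X lam n y b \<le> AL_objective X lam n y b')"

definition lam_star :: "(nat \<Rightarrow> 'p::finite \<Rightarrow> real) \<Rightarrow> nat \<Rightarrow> real" where
  "lam_star lam n = Max (range (lam n))"

definition Mset :: "real^'p^'p \<Rightarrow> ('p::finite \<Rightarrow> real) \<Rightarrow> ('p \<Rightarrow> ereal) \<Rightarrow> (real^'p) set" where
  "Mset C \<mu> \<psi> = {m. \<forall>j. (\<psi> j = \<infinity> \<longrightarrow> (C *v m) $ j = 0)
                      \<and> (\<psi> j < \<infinity> \<longrightarrow> m $ j * (C *v m) $ j \<le> \<mu> j)}"

definition minus_scaled :: "real^'p \<Rightarrow> real \<Rightarrow> (real^'p) set \<Rightarrow> (real^'p) set" where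
  "minus_scaled b c S = {b - c *\<^sub>R s | s. s \<in> S}"

end

theory Submission
  imports Defs
begin

(* Since y = X \<beta> + \<epsilon>, the residual sum of squares equals its value at the least squares
   estimate a = \<beta> + \<delta> plus (b - a)' X'X (b - a), so the adaptive Lasso is the minimiser b of
   a Lasso objective for the quadratic form H = X'X centred at a, with weights \<lambda>_j / |a_j|.
   Comparing b with a gives (b - a)' H (b - a) \<le> 2 \<Sigma> \<lambda>_j, and comparing b with the point where
   coordinate j is reset to a_j gives (b_j - a_j) (H (b - a))_j \<le> \<lambda>_j.  After rescaling by
   c = sqrt (\<lambda>*/n), v = (b - a) / c is bounded and v_j (G v)_j \<le> \<lambda>_j / \<lambda>* for G = X'X / n.
   Now (b - \<beta>) / c = v + \<delta> / c, and \<delta> / c = O_P (\<lambda>*^(-1/2)) by the central limit theorem for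
   the least squares estimator; replacing G by C and v by v + \<delta> / c therefore costs o(1), and
   \<lambda>_j / \<lambda>* + o(1) \<le> d \<lambda>0_j eventually.  None of these bounds depends on \<beta>, which gives the
   uniformity.  Since \<psi> is finite, M_d only consists of the constraints m_j (C m)_j \<le> d \<lambda>0_j. *)

definition quad_dist :: "real^'p^'p \<Rightarrow> real^'p \<Rightarrow> real^'p \<Rightarrow> real" where
  "quad_dist H a b = (b - a) \<bullet> (H *v (b - a))"

definition l1_pen :: "real^'p \<Rightarrow> real^'p::finite \<Rightarrow> real" where
  "l1_pen \<mu> b = 2 * (\<Sum>j\<in>UNIV. \<bar>\<mu>$j\<bar> * \<bar>b$j\<bar>)"

definition lasso_obj :: "real^'p^'p \<Rightarrow> real^'p \<Rightarrow> real^'p \<Rightarrow> real^'p::finite \<Rightarrow> real" where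
  "lasso_obj H a \<mu> b = quad_dist H a b + l1_pen \<mu> b"

definition lasso :: "real^'p^'p \<Rightarrow> real^'p \<Rightarrow> real^'p \<Rightarrow> real^'p::finite" where
  "lasso H a \<mu> = (THE b. \<forall>b'. lasso_obj H a \<mu> b \<le> lasso_obj H a \<mu> b')"

definition symmetric_matrix :: "real^'p^'p::finite \<Rightarrow> bool" where
  "symmetric_matrix H \<longleftrightarrow> (\<forall>x y. x \<bullet> (H *v y) = y \<bullet> (H *v x))"

definition coercive_matrix :: "real^'p^'p::finite \<Rightarrow> real \<Rightarrow> bool" where
  "coercive_matrix H \<kappa> \<longleftrightarrow> \<kappa> > 0 \<and> (\<forall>x. \<kappa> * (norm x)^2 \<le> x \<bullet> (H *v x))"

lemma l1_pen_nonneg: "0 \<le> l1_pen \<mu> b"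
  unfolding l1_pen_def by (auto intro: sum_nonneg)

lemma l1_pen_convex:
  assumes "0 \<le> t" "t \<le> 1"
  shows "l1_pen \<mu> ((1 - t) *\<^sub>R b + t *\<^sub>R b') \<le> (1 - t) * l1_pen \<mu> b + t * l1_pen \<mu> b'"
proof -
  have "\<bar>\<mu>$j\<bar> * \<bar>((1 - t) *\<^sub>R b + t *\<^sub>R b')$j\<bar> \<le> (1 - t) * (\<bar>\<mu>$j\<bar> * \<bar>b$j\<bar>) + t * (\<bar>\<mu>$j\<bar> * \<bar>b'$j\<bar>)"
    for j
  proof -
    have "\<bar>((1 - t) *\<^sub>R b + t *\<^sub>R b')$j\<bar> \<le> (1 - t) * \<bar>b$j\<bar> + t * \<bar>b'$j\<bar>"
      using assms by (simp add: abs_triangle_ineq[THEN order_trans] abs_mult)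
    then have "\<bar>\<mu>$j\<bar> * \<bar>((1 - t) *\<^sub>R b + t *\<^sub>R b')$j\<bar> \<le> \<bar>\<mu>$j\<bar> * ((1 - t) * \<bar>b$j\<bar> + t * \<bar>b'$j\<bar>)"
      by (simp add: mult_left_mono)
    then show ?thesis by (simp add: algebra_simps)
  qed
  then have "(\<Sum>j\<in>UNIV. \<bar>\<mu>$j\<bar> * \<bar>((1 - t) *\<^sub>R b + t *\<^sub>R b')$j\<bar>)
      \<le> (\<Sum>j\<in>UNIV. (1 - t) * (\<bar>\<mu>$j\<bar> * \<bar>b$j\<bar>) + t * (\<bar>\<mu>$j\<bar> * \<bar>b'$j\<bar>))"
    by (rule sum_mono)
  also have "\<dots> = (1 - t) * (\<Sum>j\<in>UNIV. \<bar>\<mu>$j\<bar> * \<bar>b$j\<bar>) + t * (\<Sum>j\<in>UNIV. \<bar>\<mu>$j\<bar> * \<bar>b'$j\<bar>)"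
    by (simp add: sum.distrib sum_distrib_left)
  finally show ?thesis unfolding l1_pen_def by linarith
qed

lemma l1_pen_cross_diff_le:
  "l1_pen \<mu> b' - l1_pen \<mu> b - l1_pen \<mu>' b' + l1_pen \<mu>' b
     \<le> 2 * ((\<Sum>j\<in>UNIV. \<bar>\<mu>$j - \<mu>'$j\<bar>) * norm (b' - b))"
proof -
  have "(\<bar>\<mu>$j\<bar> - \<bar>\<mu>'$j\<bar>) * (\<bar>b'$j\<bar> - \<bar>b$j\<bar>) \<le> \<bar>\<mu>$j - \<mu>'$j\<bar> * norm (b' - b)" for j
  proof -
    have "(\<bar>\<mu>$j\<bar> - \<bar>\<mu>'$j\<bar>) * (\<bar>b'$j\<bar> - \<bar>b$j\<bar>) \<le> \<bar>\<bar>\<mu>$j\<bar> - \<bar>\<mu>'$j\<bar>\<bar> * \<bar>\<bar>b'$j\<bar> - \<bar>b$j\<bar>\<bar>"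
      by (simp add: abs_mult[symmetric])
    also have "\<dots> \<le> \<bar>\<mu>$j - \<mu>'$j\<bar> * \<bar>(b' - b)$j\<bar>"
      by (intro mult_mono) (auto simp: abs_triangle_ineq3)
    also have "\<dots> \<le> \<bar>\<mu>$j - \<mu>'$j\<bar> * norm (b' - b)" by (intro mult_left_mono component_le_norm_cart) auto
    finally show ?thesis .
  qed
  then have "(\<Sum>j\<in>UNIV. (\<bar>\<mu>$j\<bar> - \<bar>\<mu>'$j\<bar>) * (\<bar>b'$j\<bar> - \<bar>b$j\<bar>))
      \<le> (\<Sum>j\<in>UNIV. \<bar>\<mu>$j - \<mu>'$j\<bar> * norm (b' - b))"
    by (rule sum_mono)
  moreover have "l1_pen \<mu> b' - l1_pen \<mu> b - l1_pen \<mu>' b' + l1_pen \<mu>' b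
      = 2 * (\<Sum>j\<in>UNIV. (\<bar>\<mu>$j\<bar> - \<bar>\<mu>'$j\<bar>) * (\<bar>b'$j\<bar> - \<bar>b$j\<bar>))"
    unfolding l1_pen_def by (simp add: algebra_simps sum_subtractf sum.distrib)
  ultimately show ?thesis by (simp add: sum_distrib_right)
qed

lemma quad_dist_expand:
  assumes "symmetric_matrix H"
  shows "quad_dist H a x = x \<bullet> (H *v x) - 2 * (x \<bullet> (H *v a)) + a \<bullet> (H *v a)"
  using assms unfolding quad_dist_def symmetric_matrix_def
  by (simp add: matrix_vector_mult_diff_distrib inner_diff_left inner_diff_right)

lemma coercive_quad_dist: "coercive_matrix H \<kappa> \<Longrightarrow> \<kappa> * (norm (b - a))^2 \<le> quad_dist H a b"
  unfolding coercive_matrix_def quad_dist_def by blast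

text \<open>By convexity of the penalty, the objective on the segment from b to b' is bounded by a
  quadratic in t whose value at t = 0 is the minimum, so its slope at 0 cannot be negative.\<close>

lemma lasso_obj_variational_ineq:
  assumes S: "symmetric_matrix H" and min: "\<forall>b'. lasso_obj H a \<mu> b \<le> lasso_obj H a \<mu> b'"
  shows "0 \<le> 2 * ((b' - b) \<bullet> (H *v (b - a))) + l1_pen \<mu> b' - l1_pen \<mu> b"
proof (rule ccontr)
  define h where "h = b' - b"
  define slope where "slope = 2 * (h \<bullet> (H *v (b - a))) + l1_pen \<mu> b' - l1_pen \<mu> b"
  define q where "q = h \<bullet> (H *v h)"
  assume "\<not> ?thesis"
  then have slope_neg: "slope < 0" unfolding slope_def h_def by simp
  have segment: "0 \<le> t * slope + t^2 * q" if t: "0 \<le> t" "t \<le> 1" for t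
  proof -
    have eq: "b + t *\<^sub>R h = (1 - t) *\<^sub>R b + t *\<^sub>R b'" unfolding h_def by (simp add: algebra_simps)
    have quad: "quad_dist H a (b + t *\<^sub>R h) = quad_dist H a b + 2 * t * (h \<bullet> (H *v (b - a))) + t^2 * q"
      using S unfolding quad_dist_def q_def symmetric_matrix_def
      by (simp add: algebra_simps matrix_vector_mult_diff_distrib inner_diff_left inner_diff_right
            inner_add_left inner_add_right power2_eq_square)
    have "lasso_obj H a \<mu> b \<le> lasso_obj H a \<mu> (b + t *\<^sub>R h)" using min by blast
    also have "\<dots> = quad_dist H a (b + t *\<^sub>R h) + l1_pen \<mu> ((1 - t) *\<^sub>R b + t *\<^sub>R b')"
      unfolding lasso_obj_def eq by simp
    also have "\<dots> \<le> quad_dist H a b + 2 * t * (h \<bullet> (H *v (b - a))) + t^2 * q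
                    + ((1 - t) * l1_pen \<mu> b + t * l1_pen \<mu> b')"
      unfolding quad using l1_pen_convex[OF t, of \<mu> b b'] by simp
    finally show ?thesis unfolding lasso_obj_def slope_def by (simp add: algebra_simps)
  qed
  define t where "t = min 1 (- slope / (2 * (\<bar>q\<bar> + 1)))"
  have t: "0 < t" "t \<le> 1" using slope_neg unfolding t_def by (simp_all add: field_simps)
  have "t * (2 * (\<bar>q\<bar> + 1)) \<le> - slope"
    using mult_right_mono[OF min.cobounded2, of "2 * (\<bar>q\<bar> + 1)" 1 "- slope / (2 * (\<bar>q\<bar> + 1))"]
    unfolding t_def by simp
  then have tq: "t * \<bar>q\<bar> \<le> - slope / 2" using t by (simp add: algebra_simps)
  have "0 \<le> t * (slope + t * q)"
    using segment[of t] t by (simp add: algebra_simps power2_eq_square)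
  then have "0 \<le> slope + t * q" using t by (simp add: zero_le_mult_iff)
  moreover have "t * q \<le> t * \<bar>q\<bar>" using t by (simp add: mult_left_mono)
  ultimately show False using tq slope_neg by linarith
qed

lemma lasso_obj_growth:
  assumes S: "symmetric_matrix H" and min: "\<forall>b'. lasso_obj H a \<mu> b \<le> lasso_obj H a \<mu> b'"
  shows "lasso_obj H a \<mu> b + quad_dist H b b' \<le> lasso_obj H a \<mu> b'"
proof -
  have "lasso_obj H a \<mu> b' - lasso_obj H a \<mu> b - quad_dist H b b'
      = 2 * ((b' - b) \<bullet> (H *v (b - a))) + l1_pen \<mu> b' - l1_pen \<mu> b"
    using S unfolding lasso_obj_def quad_dist_def symmetric_matrix_def
    by (simp add: algebra_simps matrix_vector_mult_diff_distrib inner_diff_left inner_diff_right)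
  with lasso_obj_variational_ineq[OF S min, of b'] show ?thesis by linarith
qed

lemma continuous_on_lasso_obj: "continuous_on S (lasso_obj H a \<mu>)"
proof -
  have "continuous_on S (\<lambda>b. H *v (b - a))"
    by (rule bounded_linear.continuous_on[OF matrix_vector_mul_bounded_linear]) (intro continuous_intros)
  then show ?thesis unfolding lasso_obj_def quad_dist_def l1_pen_def
    by (intro continuous_intros)
qed

lemma lasso_obj_has_min:
  assumes H: "coercive_matrix H \<kappa>"
  shows "\<exists>b. \<forall>b'. lasso_obj H a \<mu> b \<le> lasso_obj H a \<mu> b'"
proof -
  have \<kappa>: "\<kappa> > 0" using H unfolding coercive_matrix_def by simp
  define R where "R = sqrt (lasso_obj H a \<mu> a / \<kappa>) + 1"
  have obj_a: "lasso_obj H a \<mu> a \<ge> 0" unfolding lasso_obj_def quad_dist_def using l1_pen_nonneg by simp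
  have R: "R > 0" unfolding R_def using obj_a \<kappa> by (simp add: add_nonneg_pos)
  obtain x where x: "x \<in> cball a R" "\<forall>y\<in>cball a R. lasso_obj H a \<mu> x \<le> lasso_obj H a \<mu> y"
    using continuous_attains_inf[OF compact_cball _ continuous_on_lasso_obj[of "cball a R" H a \<mu>]] R
    by auto
  have "lasso_obj H a \<mu> x \<le> lasso_obj H a \<mu> y" for y
  proof (cases "y \<in> cball a R")
    case True then show ?thesis using x by blast
  next
    case False
    then have far: "norm (y - a) > R" by (simp add: dist_norm norm_minus_commute)
    have "lasso_obj H a \<mu> a / \<kappa> < R^2"
    proof -
      have "(sqrt (lasso_obj H a \<mu> a / \<kappa>))^2 < R^2"
        unfolding R_def using obj_a \<kappa> by (intro power_strict_mono) auto
      then show ?thesis using obj_a \<kappa> by simp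
    qed
    then have "lasso_obj H a \<mu> a < \<kappa> * R^2" using \<kappa> by (simp add: divide_less_eq mult.commute)
    also have "\<kappa> * R^2 \<le> \<kappa> * (norm (y - a))^2"
      using far R \<kappa> by (intro mult_left_mono power_mono) auto
    also have "\<dots> \<le> lasso_obj H a \<mu> y"
      using coercive_quad_dist[OF H, of y a] l1_pen_nonneg[of \<mu> y] unfolding lasso_obj_def by simp
    finally have "lasso_obj H a \<mu> a < lasso_obj H a \<mu> y" .
    moreover have "lasso_obj H a \<mu> x \<le> lasso_obj H a \<mu> a" using x R by simp
    ultimately show ?thesis by simp
  qed
  then show ?thesis by blast
qed

lemma lasso_obj_min_unique:
  assumes S: "symmetric_matrix H" and H: "coercive_matrix H \<kappa>"
    and b1: "\<forall>b'. lasso_obj H a \<mu> b1 \<le> lasso_obj H a \<mu> b'"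
    and b2: "\<forall>b'. lasso_obj H a \<mu> b2 \<le> lasso_obj H a \<mu> b'"
  shows "b1 = b2"
proof -
  have "lasso_obj H a \<mu> b1 + quad_dist H b1 b2 \<le> lasso_obj H a \<mu> b2"
    by (rule lasso_obj_growth[OF S b1])
  moreover have "lasso_obj H a \<mu> b2 \<le> lasso_obj H a \<mu> b1" using b2 by blast
  ultimately have "quad_dist H b1 b2 \<le> 0" by simp
  moreover have "\<kappa> * (norm (b2 - b1))^2 \<le> quad_dist H b1 b2" by (rule coercive_quad_dist[OF H])
  moreover have "\<kappa> > 0" using H unfolding coercive_matrix_def by simp
  ultimately have "(norm (b2 - b1))^2 \<le> 0"
    by (smt (verit) mult_pos_pos zero_less_power2 norm_ge_zero)
  then show ?thesis by simp
qed

lemma lasso_minimises: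
  assumes S: "symmetric_matrix H" and H: "coercive_matrix H \<kappa>"
  shows "\<forall>b'. lasso_obj H a \<mu> (lasso H a \<mu>) \<le> lasso_obj H a \<mu> b'"
proof -
  have "\<exists>!b. \<forall>b'. lasso_obj H a \<mu> b \<le> lasso_obj H a \<mu> b'"
    using lasso_obj_has_min[OF H] lasso_obj_min_unique[OF S H] by blast
  then show ?thesis unfolding lasso_def by (rule theI')
qed

text \<open>Adding the two growth inequalities of the minimisers for (a, \<mu>) and (a', \<mu>') cancels the
  objective values and leaves the quadratic form of their difference on the left.\<close>

lemma lasso_lipschitz:
  assumes S: "symmetric_matrix H" and H: "coercive_matrix H \<kappa>"
  shows "\<kappa> * norm (lasso H a' \<mu>' - lasso H a \<mu>)
           \<le> norm (H *v (a - a')) + (\<Sum>j\<in>UNIV. \<bar>\<mu>$j - \<mu>'$j\<bar>)"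
proof -
  define b where "b = lasso H a \<mu>"
  define b' where "b' = lasso H a' \<mu>'"
  define D where "D = b' - b"
  define L where "L = norm (H *v (a - a')) + (\<Sum>j\<in>UNIV. \<bar>\<mu>$j - \<mu>'$j\<bar>)"
  have growth: "lasso_obj H a \<mu> b + quad_dist H b b' \<le> lasso_obj H a \<mu> b'"
    "lasso_obj H a' \<mu>' b' + quad_dist H b' b \<le> lasso_obj H a' \<mu>' b"
    unfolding b_def b'_def by (intro lasso_obj_growth[OF S] lasso_minimises[OF S H])+
  have quad_D: "quad_dist H b b' = D \<bullet> (H *v D)" "quad_dist H b' b = D \<bullet> (H *v D)"
    unfolding quad_dist_def D_def by (simp_all add: algebra_simps matrix_vector_mult_diff_distrib)
  have quad: "quad_dist H a b' - quad_dist H a b - quad_dist H a' b' + quad_dist H a' b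
      = - 2 * (D \<bullet> (H *v (a - a')))"
    using S unfolding quad_dist_expand[OF S] D_def symmetric_matrix_def
    by (simp add: algebra_simps matrix_vector_mult_diff_distrib inner_diff_left inner_diff_right)
  have pen: "l1_pen \<mu> b' - l1_pen \<mu> b - l1_pen \<mu>' b' + l1_pen \<mu>' b
      \<le> 2 * ((\<Sum>j\<in>UNIV. \<bar>\<mu>$j - \<mu>'$j\<bar>) * norm D)"
    unfolding D_def by (rule l1_pen_cross_diff_le)
  have "- (D \<bullet> (H *v (a - a'))) \<le> norm D * norm (H *v (a - a'))"
    using Cauchy_Schwarz_ineq2[of D "H *v (a - a')"] by (simp add: abs_le_iff)
  with growth quad_D quad pen have "D \<bullet> (H *v D) \<le> norm D * L"
    unfolding lasso_obj_def L_def by (simp add: algebra_simps)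
  moreover have "\<kappa> * (norm D)^2 \<le> D \<bullet> (H *v D)" and \<kappa>: "\<kappa> > 0"
    using H unfolding coercive_matrix_def by blast+
  ultimately have "norm D * (\<kappa> * norm D) \<le> norm D * L"
    by (simp add: power2_eq_square algebra_simps)
  then have "\<kappa> * norm D \<le> L"
    by (cases "norm D = 0") (auto simp: L_def sum_nonneg mult_le_cancel_left_pos)
  then show ?thesis unfolding D_def b_def b'_def L_def .
qed

lemma continuous_on_lasso:
  assumes S: "symmetric_matrix H" and H: "coercive_matrix H \<kappa>"
  shows "continuous_on UNIV (\<lambda>x. lasso H (fst x) (snd x))"
proof -
  have \<kappa>: "\<kappa> > 0" using H unfolding coercive_matrix_def by simp
  obtain K where K: "K > 0" "\<And>x. norm (H *v x) \<le> norm x * K"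
    using bounded_linear.pos_bounded[OF matrix_vector_mul_bounded_linear[of H]] by blast
  define L where "L = (K + real CARD('a)) / \<kappa>"
  have L: "L > 0" unfolding L_def using K \<kappa> by simp
  have "dist (lasso H (fst x') (snd x')) (lasso H (fst x) (snd x)) \<le> L * dist x' x"
    for x x' :: "(real^'a) \<times> (real^'a)"
  proof -
    obtain a \<mu> a' \<mu>' where x: "x = (a, \<mu>)" and x': "x' = (a', \<mu>')" by (cases x, cases x')
    have da: "norm (a - a') \<le> dist x' x" and dm: "norm (\<mu> - \<mu>') \<le> dist x' x" using x x'
      by (simp_all add: dist_norm norm_Pair norm_minus_commute real_sqrt_sum_squares_ge1
          real_sqrt_sum_squares_ge2)
    have "(\<Sum>j\<in>UNIV. \<bar>\<mu>$j - \<mu>'$j\<bar>) \<le> (\<Sum>j\<in>(UNIV::'a set). dist x' x)"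
      by (intro sum_mono) (metis component_le_norm_cart vector_minus_component dm order_trans)
    moreover have "norm (H *v (a - a')) \<le> K * dist x' x"
      using K(2)[of "a - a'"] da K(1) by (smt (verit) mult.commute mult_left_mono)
    ultimately have "\<kappa> * norm (lasso H a' \<mu>' - lasso H a \<mu>) \<le> (K + real CARD('a)) * dist x' x"
      using lasso_lipschitz[OF S H, of a' \<mu>' a \<mu>] by (simp add: algebra_simps)
    then show ?thesis unfolding x x' L_def using \<kappa> by (simp add: field_simps dist_norm)
  qed
  then have "lipschitz_on L UNIV (\<lambda>x. lasso H (fst x) (snd x))"
    using L by (intro lipschitz_onI) auto
  then show ?thesis by (rule lipschitz_on_continuous_on)
qed

lemma adaptive_weight_times_le:
  fixes l :: "'p::finite \<Rightarrow> real"
  assumes "l j \<ge> 0"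
  shows "\<bar>(\<chi> j. l j / \<bar>a$j\<bar>)$j\<bar> * \<bar>a$j\<bar> \<le> l j"
  using assms by (cases "a$j = 0") auto

lemma lasso_adaptive_quad_dist_le:
  assumes S: "symmetric_matrix H" and H: "coercive_matrix H \<kappa>" and l: "\<And>j. l j \<ge> 0"
  shows "quad_dist H a (lasso H a (\<chi> j. l j / \<bar>a$j\<bar>)) \<le> 2 * (\<Sum>j\<in>UNIV. l j)"
proof -
  define \<mu> where "\<mu> = (\<chi> j. l j / \<bar>a$j\<bar>)"
  have "lasso_obj H a \<mu> (lasso H a \<mu>) \<le> lasso_obj H a \<mu> a"
    using lasso_minimises[OF S H] by blast
  also have "\<dots> = l1_pen \<mu> a" unfolding lasso_obj_def quad_dist_def by simp
  also have "\<dots> \<le> 2 * (\<Sum>j\<in>UNIV. l j)"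
    unfolding l1_pen_def \<mu>_def by (intro mult_left_mono sum_mono adaptive_weight_times_le l) simp
  finally show ?thesis using l1_pen_nonneg[of \<mu> "lasso H a \<mu>"] unfolding lasso_obj_def \<mu>_def by linarith
qed

text \<open>Compare the minimiser b with the point that agrees with b except for b_j := a_j.\<close>

lemma lasso_adaptive_coordinate_le:
  assumes S: "symmetric_matrix H" and H: "coercive_matrix H \<kappa>" and l: "\<And>j. l j \<ge> 0"
    and b: "b = lasso H a (\<chi> j. l j / \<bar>a$j\<bar>)"
  shows "(b$j - a$j) * (H *v (b - a))$j \<le> l j"
proof -
  define \<mu> where "\<mu> = (\<chi> j. l j / \<bar>a$j\<bar>)"
  define b' where "b' = (\<chi> k. if k = j then a$j else b$k)"
  have "0 \<le> 2 * ((b' - b) \<bullet> (H *v (b - a))) + l1_pen \<mu> b' - l1_pen \<mu> b"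
    using lasso_obj_variational_ineq[OF S lasso_minimises[OF S H]] unfolding b \<mu>_def by blast
  moreover have "(b' - b) \<bullet> (H *v (b - a)) = - ((b$j - a$j) * (H *v (b - a))$j)"
  proof -
    have "(b' - b) \<bullet> (H *v (b - a)) = (\<Sum>k\<in>UNIV. if k = j then (a$j - b$j) * (H *v (b - a))$k else 0)"
      unfolding inner_vec_def b'_def by (rule sum.cong) auto
    then show ?thesis by (simp add: algebra_simps)
  qed
  moreover have "l1_pen \<mu> b' - l1_pen \<mu> b = 2 * (\<bar>\<mu>$j\<bar> * \<bar>a$j\<bar> - \<bar>\<mu>$j\<bar> * \<bar>b$j\<bar>)"
  proof -
    have "(\<Sum>k\<in>UNIV. \<bar>\<mu>$k\<bar> * \<bar>b'$k\<bar> - \<bar>\<mu>$k\<bar> * \<bar>b$k\<bar>)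
        = (\<Sum>k\<in>UNIV. if k = j then \<bar>\<mu>$j\<bar> * \<bar>a$j\<bar> - \<bar>\<mu>$j\<bar> * \<bar>b$j\<bar> else 0)"
      by (rule sum.cong) (auto simp: b'_def)
    then show ?thesis unfolding l1_pen_def by (simp add: sum_subtractf algebra_simps)
  qed
  moreover have "\<bar>\<mu>$j\<bar> * \<bar>a$j\<bar> \<le> l j" unfolding \<mu>_def by (rule adaptive_weight_times_le[OF l])
  moreover have "0 \<le> \<bar>\<mu>$j\<bar> * \<bar>b$j\<bar>" by simp
  ultimately show ?thesis by (smt (verit))
qed

lemma invertible_matrix_inv:
  fixes A :: "real^'n^'n"
  assumes "invertible A"
  shows "A ** matrix_inv A = mat 1" "matrix_inv A ** A = mat 1"
proof -
  have "\<exists>A'. A ** A' = mat 1 \<and> A' ** A = mat 1" using assms unfolding invertible_def by blast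
  then have "A ** matrix_inv A = mat 1 \<and> matrix_inv A ** A = mat 1"
    unfolding matrix_inv_def by (rule someI_ex)
  then show "A ** matrix_inv A = mat 1" "matrix_inv A ** A = mat 1" by auto
qed

lemma matrix_inv_cancel:
  fixes A :: "real^'n^'n"
  assumes "invertible A"
  shows "A *v (matrix_inv A *v v) = v" "matrix_inv A *v (A *v v) = v"
  using invertible_matrix_inv[OF assms] by (simp_all add: matrix_vector_mul_assoc)

lemma coercive_matrix_invertible:
  fixes H :: "real^'n^'n"
  assumes H: "coercive_matrix H \<kappa>"
  shows "invertible H"
proof -
  have "x = 0" if "H *v x = 0" for x
  proof -
    have "\<kappa> * (norm x)^2 \<le> 0" and "\<kappa> > 0"
      using H that unfolding coercive_matrix_def by (metis inner_zero_right)+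
    then show "x = 0" by (simp add: mult_le_0_iff)
  qed
  then have "\<exists>B. B ** H = mat 1" using matrix_left_invertible_ker by blast
  then show ?thesis using invertible_left_inverse by blast
qed

lemma matrix_vector_norm_le:
  fixes A :: "real^'n::finite^'m::finite"
  shows "norm (A *v x) \<le> real CARD('m) * norm A * norm x"
proof -
  have "norm (A *v x) \<le> (\<Sum>i\<in>UNIV. \<bar>(A *v x) $ i\<bar>)" by (rule norm_le_l1_cart)
  also have "\<dots> \<le> (\<Sum>i::'m\<in>UNIV. norm A * norm x)"
  proof (rule sum_mono)
    fix i
    have "\<bar>(A *v x) $ i\<bar> \<le> norm (A $ i) * norm x"
      by (simp add: matrix_mult_dot Cauchy_Schwarz_ineq2)
    also have "\<dots> \<le> norm A * norm x" by (metis mult_right_mono norm_ge_zero Finite_Cartesian_Product.norm_nth_le)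
    finally show "\<bar>(A *v x) $ i\<bar> \<le> norm A * norm x" .
  qed
  finally show ?thesis by simp
qed

lemma pos_def_coercive:
  fixes C :: "real^'p::finite^'p"
  assumes C: "\<And>m. m \<noteq> 0 \<Longrightarrow> m \<bullet> (C *v m) > 0"
  shows "\<exists>\<kappa>. coercive_matrix C \<kappa>"
proof -
  have cont: "continuous_on (sphere 0 1) (\<lambda>x::real^'p. x \<bullet> (C *v x))"
    by (intro continuous_intros bounded_linear.continuous_on[OF matrix_vector_mul_bounded_linear])
  have "axis undefined 1 \<in> sphere (0::real^'p) 1" by simp
  then obtain x0 where x0: "x0 \<in> sphere 0 1" "\<forall>y\<in>sphere 0 1. x0 \<bullet> (C *v x0) \<le> y \<bullet> (C *v y)"
    using continuous_attains_inf[OF compact_sphere _ cont] by blast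
  define \<kappa> where "\<kappa> = x0 \<bullet> (C *v x0)"
  have "x0 \<noteq> 0" using x0(1) by auto
  then have \<kappa>: "\<kappa> > 0" unfolding \<kappa>_def using C by auto
  have "\<kappa> * (norm x)^2 \<le> x \<bullet> (C *v x)" for x
  proof (cases "x = 0")
    case False
    define u where "u = (1 / norm x) *\<^sub>R x"
    have "u \<in> sphere 0 1" unfolding u_def using False by simp
    then have "\<kappa> \<le> u \<bullet> (C *v u)" using x0(2) unfolding \<kappa>_def by blast
    moreover have "x \<bullet> (C *v x) = (norm x)^2 * (u \<bullet> (C *v u))"
      using False by (simp add: u_def matrix_vector_mult_scaleR power2_eq_square)
    ultimately show ?thesis by (metis mult.commute mult_right_mono zero_le_power2)
  qed simp
  then show ?thesis using \<kappa> unfolding coercive_matrix_def by blast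
qed

lemma coercive_matrix_near:
  fixes C G :: "real^'p::finite^'p"
  assumes C: "coercive_matrix C \<kappa>" and near: "real CARD('p) * norm (G - C) \<le> \<kappa> / 2"
  shows "coercive_matrix G (\<kappa> / 2)"
proof -
  have "\<kappa> / 2 * (norm x)^2 \<le> x \<bullet> (G *v x)" for x
  proof -
    have "\<bar>x \<bullet> ((G - C) *v x)\<bar> \<le> norm x * norm ((G - C) *v x)" by (rule Cauchy_Schwarz_ineq2)
    also have "\<dots> \<le> norm x * (real CARD('p) * norm (G - C) * norm x)"
      by (intro mult_left_mono matrix_vector_norm_le) auto
    also have "\<dots> = (real CARD('p) * norm (G - C)) * (norm x)^2" by (simp add: power2_eq_square)
    also have "\<dots> \<le> \<kappa> / 2 * (norm x)^2" using near by (intro mult_right_mono) auto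
    finally have "\<bar>x \<bullet> ((G - C) *v x)\<bar> \<le> \<kappa> / 2 * (norm x)^2" .
    moreover have "x \<bullet> (G *v x) = x \<bullet> (C *v x) + x \<bullet> ((G - C) *v x)"
      by (simp add: algebra_simps inner_diff_right)
    moreover have "\<kappa> * (norm x)^2 \<le> x \<bullet> (C *v x)" using C unfolding coercive_matrix_def by blast
    ultimately show ?thesis by linarith
  qed
  then show ?thesis using C unfolding coercive_matrix_def by simp
qed

lemma coercive_matrix_scaleR:
  assumes "coercive_matrix G \<kappa>" "s > 0"
  shows "coercive_matrix (s *\<^sub>R G) (s * \<kappa>)"
  using assms unfolding coercive_matrix_def
  by (simp add: scaleR_matrix_vector_assoc[symmetric] mult.assoc mult_left_mono)

lemma XtX_inner: "x \<bullet> (XtX X n *v y) = (\<Sum>i<n. X_mult X n x i * X_mult X n y i)"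
proof -
  have "x \<bullet> (XtX X n *v y) = (\<Sum>j\<in>UNIV. \<Sum>k\<in>UNIV. \<Sum>i<n. (X n i j * x$j) * (X n i k * y$k))"
    by (simp add: inner_vec_def XtX_def matrix_vector_mult_def sum_distrib_left sum_distrib_right mult_ac)
  also have "\<dots> = (\<Sum>j\<in>UNIV. \<Sum>i<n. \<Sum>k\<in>UNIV. (X n i j * x$j) * (X n i k * y$k))"
    by (rule sum.cong[OF refl], rule sum.swap)
  also have "\<dots> = (\<Sum>i<n. \<Sum>j\<in>UNIV. \<Sum>k\<in>UNIV. (X n i j * x$j) * (X n i k * y$k))"
    by (rule sum.swap)
  also have "\<dots> = (\<Sum>i<n. X_mult X n x i * X_mult X n y i)"
    by (simp add: X_mult_def sum_product mult_ac)
  finally show ?thesis .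
qed

lemma Xt_mult_inner: "x \<bullet> Xt_mult X n y = (\<Sum>i<n. X_mult X n x i * y i)"
proof -
  have "x \<bullet> Xt_mult X n y = (\<Sum>j\<in>UNIV. \<Sum>i<n. (X n i j * x$j) * y i)"
    by (simp add: inner_vec_def Xt_mult_def sum_distrib_left mult_ac)
  also have "\<dots> = (\<Sum>i<n. \<Sum>j\<in>UNIV. (X n i j * x$j) * y i)" by (rule sum.swap)
  also have "\<dots> = (\<Sum>i<n. X_mult X n x i * y i)"
    by (simp add: X_mult_def sum_distrib_right)
  finally show ?thesis .
qed

lemma symmetric_XtX: "symmetric_matrix (XtX X n)"
  unfolding symmetric_matrix_def XtX_inner by (simp add: mult.commute)

lemma X_mult_diff: "X_mult X n (b - a) i = X_mult X n b i - X_mult X n a i"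
  by (simp add: X_mult_def algebra_simps sum_subtractf)

lemma Xt_mult_response: "Xt_mult X n (response X n \<beta> eps) = XtX X n *v \<beta> + Xt_mult X n eps"
proof -
  have "x \<bullet> Xt_mult X n (response X n \<beta> eps) = x \<bullet> (XtX X n *v \<beta> + Xt_mult X n eps)" for x
    by (simp add: Xt_mult_inner XtX_inner inner_add_right response_def algebra_simps sum.distrib)
  then show ?thesis by (metis vector_eq_ldot)
qed

definition LS_error :: "(nat \<Rightarrow> nat \<Rightarrow> 'p::finite \<Rightarrow> real) \<Rightarrow> nat \<Rightarrow> (nat \<Rightarrow> real) \<Rightarrow> real^'p" where
  "LS_error X n eps = matrix_inv (XtX X n) *v Xt_mult X n eps"

lemma beta_LS_response:
  assumes "invertible (XtX X n)"
  shows "beta_LS X n (response X n \<beta> eps) = \<beta> + LS_error X n eps"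
  unfolding beta_LS_def LS_error_def Xt_mult_response
  by (simp add: matrix_vector_right_distrib matrix_inv_cancel[OF assms])

lemma RSS_decomp:
  assumes "invertible (XtX X n)"
  shows "(\<Sum>i<n. (y i - X_mult X n b i)\<^sup>2)
       = (\<Sum>i<n. (y i - X_mult X n (beta_LS X n y) i)\<^sup>2) + quad_dist (XtX X n) (beta_LS X n y) b"
proof -
  define a where "a = beta_LS X n y"
  define h where "h = b - a"
  have normal_eq: "XtX X n *v a = Xt_mult X n y"
    unfolding a_def beta_LS_def by (rule matrix_inv_cancel(1)[OF assms])
  have cross: "(\<Sum>i<n. (y i - X_mult X n a i) * X_mult X n h i) = 0"
  proof -
    have "(\<Sum>i<n. (y i - X_mult X n a i) * X_mult X n h i) = h \<bullet> Xt_mult X n y - h \<bullet> (XtX X n *v a)"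
      by (simp add: Xt_mult_inner XtX_inner algebra_simps sum_subtractf)
    then show ?thesis using normal_eq by simp
  qed
  have square: "(\<Sum>i<n. (X_mult X n h i)^2) = quad_dist (XtX X n) a b"
    unfolding quad_dist_def h_def[symmetric] XtX_inner by (simp add: power2_eq_square)
  have "(\<Sum>i<n. (y i - X_mult X n b i)\<^sup>2)
      = (\<Sum>i<n. (y i - X_mult X n a i)\<^sup>2 - 2 * ((y i - X_mult X n a i) * X_mult X n h i)
                + (X_mult X n h i)^2)"
    by (rule sum.cong) (auto simp: h_def X_mult_diff power2_eq_square algebra_simps)
  also have "\<dots> = (\<Sum>i<n. (y i - X_mult X n a i)\<^sup>2) - 2 * (\<Sum>i<n. (y i - X_mult X n a i) * X_mult X n h i)
                + (\<Sum>i<n. (X_mult X n h i)^2)"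
    by (simp add: sum.distrib sum_subtractf sum_distrib_left)
  finally show ?thesis using cross square unfolding a_def by simp
qed

lemma beta_AL_eq_lasso:
  assumes "invertible (XtX X n)" and lam: "\<And>j. lam n j \<ge> 0"
  shows "beta_AL X lam n y = lasso (XtX X n) (beta_LS X n y) (\<chi> j. lam n j / \<bar>beta_LS X n y $ j\<bar>)"
proof -
  define a where "a = beta_LS X n y"
  define \<mu> where "\<mu> = (\<chi> j. lam n j / \<bar>a $ j\<bar>)"
  have "AL_objective X lam n y b = (\<Sum>i<n. (y i - X_mult X n a i)\<^sup>2) + lasso_obj (XtX X n) a \<mu> b" for b
  proof -
    have "l1_pen \<mu> b = 2 * (\<Sum>j\<in>UNIV. lam n j * \<bar>b $ j\<bar> / \<bar>a $ j\<bar>)"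
      unfolding l1_pen_def \<mu>_def using lam by (simp add: abs_of_nonneg)
    moreover have "(\<Sum>i<n. (y i - X_mult X n b i)\<^sup>2)
        = (\<Sum>i<n. (y i - X_mult X n a i)\<^sup>2) + quad_dist (XtX X n) a b"
      unfolding a_def by (rule RSS_decomp[OF assms(1)])
    ultimately show ?thesis unfolding AL_objective_def lasso_obj_def a_def by simp
  qed
  then show ?thesis unfolding beta_AL_def lasso_def a_def \<mu>_def by simp
qed

lemma Mset_ereal: "Mset C \<mu> (\<lambda>j. ereal (\<psi> j)) = {m. \<forall>j. m$j * (C *v m)$j \<le> \<mu> j}"
  by (simp add: Mset_def)

lemma closed_coordinate_quadratic_constraints:
  "closed {m::real^'p::finite. \<forall>j. m$j * (C *v m)$j \<le> \<mu> j}"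
proof -
  have "closed {m::real^'p. m$j * (C *v m)$j \<le> \<mu> j}" for j
  proof -
    have "continuous_on UNIV (\<lambda>m::real^'p. m$j * (C *v m)$j)"
      by (intro continuous_intros continuous_on_component
           bounded_linear.continuous_on[OF matrix_vector_mul_bounded_linear])
    then show ?thesis using closed_Collect_le[OF _ continuous_on_const, of _ "\<mu> j"] by simp
  qed
  then show ?thesis by (simp add: Collect_all_eq closed_INT)
qed

lemma minus_scaled_iff:
  assumes "c > 0"
  shows "\<beta> \<in> minus_scaled b c S \<longleftrightarrow> (1/c) *\<^sub>R (b - \<beta>) \<in> S"
proof
  assume "\<beta> \<in> minus_scaled b c S"
  then obtain s where "s \<in> S" "\<beta> = b - c *\<^sub>R s" unfolding minus_scaled_def by auto
  then show "(1/c) *\<^sub>R (b - \<beta>) \<in> S" using assms by simp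
next
  assume "(1/c) *\<^sub>R (b - \<beta>) \<in> S"
  moreover have "\<beta> = b - c *\<^sub>R ((1/c) *\<^sub>R (b - \<beta>))" using assms by simp
  ultimately show "\<beta> \<in> minus_scaled b c S" unfolding minus_scaled_def by blast
qed

definition perturbation_error :: "real \<Rightarrow> real \<Rightarrow> real \<Rightarrow> real \<Rightarrow> real \<Rightarrow> real" where
  "perturbation_error p B r \<Delta> c = (B + r) * (p * \<Delta> * B + p * c * r) + r * p * (c + \<Delta>) * B"

lemma coordinate_quadratic_perturb:
  fixes G C :: "real^'p::finite^'p" and v \<epsilon> :: "real^'p"
  assumes v: "norm v \<le> B" and \<epsilon>: "norm \<epsilon> \<le> r"
  shows "(v + \<epsilon>)$j * (C *v (v + \<epsilon>))$j
           \<le> v$j * (G *v v)$j + perturbation_error (real CARD('p)) B r (norm (G - C)) (norm C)"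
proof -
  define p where "p = real CARD('p)"
  define \<Delta> where "\<Delta> = norm (G - C)"
  have "B \<ge> 0" "r \<ge> 0" using norm_ge_zero[of v] norm_ge_zero[of \<epsilon>] v \<epsilon> by linarith+
  then have nonneg: "p \<ge> 0" "B \<ge> 0" "\<Delta> \<ge> 0" "r \<ge> 0" unfolding p_def \<Delta>_def by auto
  have "C *v (v + \<epsilon>) - G *v v = (C - G) *v v + C *v \<epsilon>" by (simp add: algebra_simps)
  then have "\<bar>(C *v (v + \<epsilon>) - G *v v)$j\<bar> \<le> norm ((C - G) *v v) + norm (C *v \<epsilon>)"
    by (metis component_le_norm_cart norm_triangle_ineq order_trans)
  also have "norm ((C - G) *v v) \<le> p * \<Delta> * B"
    using matrix_vector_norm_le[of "C - G" v] v nonneg unfolding p_def \<Delta>_def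
    by (simp add: norm_minus_commute mult_left_mono order_trans)
  also have "norm (C *v \<epsilon>) \<le> p * norm C * r"
    using matrix_vector_norm_le[of C \<epsilon>] \<epsilon> nonneg unfolding p_def
    by (simp add: mult_left_mono order_trans)
  finally have diff: "\<bar>(C *v (v + \<epsilon>) - G *v v)$j\<bar> \<le> p * \<Delta> * B + p * norm C * r"
    by simp
  have "\<bar>(G *v v)$j\<bar> \<le> p * norm G * norm v"
    using component_le_norm_cart[of "G *v v" j] matrix_vector_norm_le[of G v] unfolding p_def by simp
  also have "\<dots> \<le> p * (norm C + \<Delta>) * B"
    using norm_triangle_ineq[of C "G - C"] v nonneg unfolding \<Delta>_def by (intro mult_mono) auto
  finally have Gv: "\<bar>(G *v v)$j\<bar> \<le> p * (norm C + \<Delta>) * B" .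
  have "\<bar>(v + \<epsilon>)$j\<bar> \<le> B + r"
    using component_le_norm_cart[of "v + \<epsilon>" j] norm_triangle_ineq[of v \<epsilon>] v \<epsilon> by linarith
  then have "\<bar>(v + \<epsilon>)$j\<bar> * \<bar>(C *v (v + \<epsilon>) - G *v v)$j\<bar> \<le> (B + r) * (p * \<Delta> * B + p * norm C * r)"
    using diff by (intro mult_mono) auto
  then have "(v + \<epsilon>)$j * (C *v (v + \<epsilon>) - G *v v)$j \<le> (B + r) * (p * \<Delta> * B + p * norm C * r)"
    using abs_ge_self[of "(v + \<epsilon>)$j * (C *v (v + \<epsilon>) - G *v v)$j"] unfolding abs_mult by linarith
  moreover have "\<bar>\<epsilon>$j\<bar> * \<bar>(G *v v)$j\<bar> \<le> r * (p * (norm C + \<Delta>) * B)"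
    using component_le_norm_cart[of \<epsilon> j] \<epsilon> Gv nonneg by (intro mult_mono) auto
  then have "\<epsilon>$j * (G *v v)$j \<le> r * p * (norm C + \<Delta>) * B"
    using abs_ge_self[of "\<epsilon>$j * (G *v v)$j"] unfolding abs_mult by (simp add: mult.assoc)
  moreover have "(v + \<epsilon>)$j * (C *v (v + \<epsilon>))$j
      = (v + \<epsilon>)$j * (C *v (v + \<epsilon>) - G *v v)$j + \<epsilon>$j * (G *v v)$j + v$j * (G *v v)$j"
    by (simp add: algebra_simps)
  ultimately show ?thesis unfolding perturbation_error_def p_def \<Delta>_def by linarith
qed

text \<open>Here s plays the role of n, ls of \<lambda>* and (1 / s) H of X'X / n.\<close>

lemma lasso_rescaled_constraints:
  fixes H C :: "real^'p::finite^'p" and l l0 :: "'p \<Rightarrow> real"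
  assumes S: "symmetric_matrix H" and H: "coercive_matrix H (s * \<kappa>)" and s: "s > 0"
    and l: "\<And>j. 0 \<le> l j" "\<And>j. l j \<le> ls" and ls: "ls > 0"
    and c: "c = sqrt (ls / s)" and \<delta>: "norm ((1/c) *\<^sub>R \<delta>) \<le> r"
    and small: "\<And>j. l j / ls + perturbation_error (real CARD('p)) (sqrt (2 * real CARD('p) / \<kappa>)) r
                        (norm ((1/s) *\<^sub>R H - C)) (norm C) \<le> d * l0 j"
  shows "(1/c) *\<^sub>R (lasso H (\<beta> + \<delta>) (\<chi> j. l j / \<bar>(\<beta> + \<delta>)$j\<bar>) - \<beta>)
           \<in> {m. \<forall>j. m$j * (C *v m)$j \<le> d * l0 j}"
proof -
  define p where "p = real CARD('p)"
  define G where "G = (1/s) *\<^sub>R H"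
  define a where "a = \<beta> + \<delta>"
  define b where "b = lasso H a (\<chi> j. l j / \<bar>a$j\<bar>)"
  define v where "v = (1/c) *\<^sub>R (b - a)"
  have \<kappa>: "\<kappa> > 0" using H s unfolding coercive_matrix_def by (simp add: zero_less_mult_iff)
  have c0: "c > 0" and c2: "c^2 = ls / s" unfolding c using ls s by simp_all
  have "(\<Sum>j\<in>UNIV. l j) \<le> p * ls" unfolding p_def using sum_mono[of UNIV l "\<lambda>_. ls"] l by simp
  moreover have "quad_dist H a b \<le> 2 * (\<Sum>j\<in>UNIV. l j)"
    unfolding b_def by (rule lasso_adaptive_quad_dist_le[OF S H l(1)])
  ultimately have "s * \<kappa> * (norm (b - a))^2 \<le> 2 * (p * ls)"
    using coercive_quad_dist[OF H, of b a] by linarith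
  moreover have "b - a = c *\<^sub>R v" unfolding v_def using c0 by simp
  ultimately have "(s * c^2) * (\<kappa> * (norm v)^2) \<le> (s * c^2) * (2 * p)"
    using c2 s by (simp add: power_mult_distrib ac_simps)
  then have "\<kappa> * (norm v)^2 \<le> 2 * p" using c0 s by (simp add: mult_le_cancel_left_pos)
  then have "(norm v)^2 \<le> 2 * p / \<kappa>" using \<kappa> by (simp add: field_simps)
  then have v_bound: "norm v \<le> sqrt (2 * p / \<kappa>)" by (intro real_le_rsqrt)
  have "m$j * (C *v m)$j \<le> d * l0 j" if m: "m = (1/c) *\<^sub>R (b - \<beta>)" for m j
  proof -
    have "v$j * (G *v v)$j = (1 / (c^2 * s)) * ((b$j - a$j) * (H *v (b - a))$j)"
      unfolding v_def G_def
      by (simp add: scaleR_matrix_vector_assoc[symmetric] matrix_vector_mult_scaleR power2_eq_square)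
    also have "\<dots> \<le> (1 / (c^2 * s)) * l j"
      using lasso_adaptive_coordinate_le[OF S H l(1) b_def, of j] c0 s by (intro mult_left_mono) auto
    also have "\<dots> = l j / ls" unfolding c2 using s by simp
    finally have "v$j * (G *v v)$j \<le> l j / ls" .
    moreover have "m = v + (1/c) *\<^sub>R \<delta>" unfolding m v_def a_def by (simp add: algebra_simps)
    ultimately show ?thesis
      using coordinate_quadratic_perturb[OF v_bound[unfolded p_def] \<delta>, of j C G] small[of j]
      unfolding G_def by simp
  qed
  then show ?thesis unfolding b_def a_def by blast
qed

lemma borel_measurable_vec_lambda:
  fixes f :: "'w \<Rightarrow> real^'n::finite"
  assumes "\<And>j. (\<lambda>w. f w $ j) \<in> borel_measurable M"
  shows "f \<in> borel_measurable M"
proof (subst borel_measurable_euclidean_space, intro ballI)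
  fix i :: "real^'n" assume "i \<in> Basis"
  then obtain j where "i = axis j 1" unfolding Basis_vec_def by auto
  then show "(\<lambda>x. f x \<bullet> i) \<in> borel_measurable M" using assms[of j] by (simp add: inner_axis)
qed

lemma borel_measurable_LS_error:
  assumes [measurable]: "\<And>i. e i \<in> borel_measurable M"
  shows "(\<lambda>w. LS_error X n (\<lambda>i. e i w)) \<in> borel_measurable M"
proof -
  have "(\<lambda>w. Xt_mult X n (\<lambda>i. e i w)) \<in> borel_measurable M"
    by (rule borel_measurable_vec_lambda) (simp add: Xt_mult_def)
  then show ?thesis unfolding LS_error_def
    by (rule borel_measurable_continuous_on[OF matrix_vector_mult_linear_continuous_on])
qed

lemma AL_event_eq_lasso_event:
  assumes "invertible (XtX X n)" and "\<And>j. lam n j \<ge> 0" and "c > 0"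
  shows "{w\<in>space M. \<beta> \<in> minus_scaled (beta_AL X lam n (response X n \<beta> (\<lambda>i. e i w))) c S}
    = {w\<in>space M. (1/c) *\<^sub>R (lasso (XtX X n) (\<beta> + LS_error X n (\<lambda>i. e i w))
          (\<chi> j. lam n j / \<bar>(\<beta> + LS_error X n (\<lambda>i. e i w))$j\<bar>) - \<beta>) \<in> S}"
  by (simp only: beta_AL_eq_lasso[where lam=lam and n=n and X=X, OF assms(1,2)]
      beta_LS_response[OF assms(1)] minus_scaled_iff[OF assms(3)])

lemma lasso_event_measurable:
  assumes S: "symmetric_matrix H" and H: "coercive_matrix H \<kappa>" and T: "closed T"
    and a[measurable]: "a \<in> borel_measurable M"
  shows "{w\<in>space M. (1/c) *\<^sub>R (lasso H (a w) (\<chi> j. l j / \<bar>a w $ j\<bar>) - \<beta>) \<in> T} \<in> sets M"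
proof -
  have [measurable]: "(\<lambda>w. a w $ j) \<in> borel_measurable M" for j
    by (rule measurable_compose[OF a borel_measurable_nth])
  have "(\<lambda>w. \<chi> j. l j / \<bar>a w $ j\<bar>) \<in> borel_measurable M"
    by (rule borel_measurable_vec_lambda) simp
  then have "(\<lambda>w. lasso H (a w) (\<chi> j. l j / \<bar>a w $ j\<bar>)) \<in> borel_measurable M"
    by (rule borel_measurable_continuous_Pair[OF a _ continuous_on_lasso[OF S H]])
  then have "(\<lambda>w. (1/c) *\<^sub>R (lasso H (a w) (\<chi> j. l j / \<bar>a w $ j\<bar>) - \<beta>)) \<in> borel_measurable M"
    by measurable
  from measurable_sets[OF this borel_closed[OF T]] show ?thesis
    by (simp add: vimage_def Int_def conj_commute)
qed

lemma cdf_distr_eq: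
  assumes "Z \<in> borel_measurable M"
  shows "cdf (distr M borel Z) x = measure M {w\<in>space M. Z w \<le> x}"
proof -
  have "cdf (distr M borel Z) x = measure M (Z -` {..x} \<inter> space M)"
    unfolding cdf_def by (rule measure_distr[OF assms]) auto
  also have "Z -` {..x} \<inter> space M = {w\<in>space M. Z w \<le> x}" by auto
  finally show ?thesis .
qed

lemma normal_density_real_distribution:
  assumes "s > 0"
  shows "real_distribution (density lborel (normal_density m s))"
    and "\<And>x. measure (density lborel (normal_density m s)) {x} = 0"
proof -
  show "real_distribution (density lborel (normal_density m s))"
    unfolding real_distribution_def real_distribution_axioms_def
    using prob_space_normal_density[OF assms] by simp
  fix x
  have "emeasure (density lborel (normal_density m s)) {x}
      = (\<integral>\<^sup>+ y. ennreal (normal_density m s y) * indicator {x} y \<partial>lborel)"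
    by (rule emeasure_density) auto
  also have "\<dots> = 0" by (rule nn_integral_null_set) auto
  finally show "measure (density lborel (normal_density m s)) {x} = 0" by (simp add: measure_def)
qed

lemma weak_conv_bounded_in_prob:
  fixes Z :: "nat \<Rightarrow> 'w \<Rightarrow> real"
  assumes "prob_space M" and Z: "\<And>n. Z n \<in> borel_measurable M"
    and wc: "weak_conv_m (\<lambda>n. distr M borel (Z n)) N" and "real_distribution N"
    and atomless: "\<And>x. measure N {x} = 0" and \<eta>: "\<eta> > 0"
  shows "\<forall>\<^sub>F K in at_top. \<forall>\<^sub>F n in sequentially. measure M {w\<in>space M. K < \<bar>Z n w\<bar>} \<le> \<eta>"
proof -
  interpret N: real_distribution N by fact
  interpret M: prob_space M by fact
  have "\<forall>\<^sub>F x in at_top. 1 - \<eta>/4 < cdf N x"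
    using N.cdf_lim_at_top_prob \<eta> by (intro order_tendstoD(1)) auto
  then obtain K0 where K0: "\<And>x. x \<ge> K0 \<Longrightarrow> 1 - \<eta>/4 < cdf N x"
    by (auto simp: eventually_at_top_linorder)
  have "\<forall>\<^sub>F x in at_bot. cdf N x < \<eta>/4"
    using N.cdf_lim_at_bot \<eta> by (intro order_tendstoD(2)) auto
  then obtain K1 where K1: "\<And>x. x \<le> K1 \<Longrightarrow> cdf N x < \<eta>/4"
    by (auto simp: eventually_at_bot_linorder)
  have cdf_lim: "(\<lambda>n. cdf (distr M borel (Z n)) x) \<longlonglongrightarrow> cdf N x" for x
    using wc atomless N.isCont_cdf unfolding weak_conv_m_def weak_conv_def by blast
  have "\<forall>\<^sub>F n in sequentially. measure M {w\<in>space M. K < \<bar>Z n w\<bar>} \<le> \<eta>"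
    if K: "K \<ge> max K0 (- K1)" for K
  proof -
    have "\<forall>\<^sub>F n in sequentially. 1 - \<eta>/2 < cdf (distr M borel (Z n)) K"
      using cdf_lim K0[of K] K \<eta> by (intro order_tendstoD(1)) auto
    moreover have "\<forall>\<^sub>F n in sequentially. cdf (distr M borel (Z n)) (-K) < \<eta>/2"
      using cdf_lim K1[of "-K"] K \<eta> by (intro order_tendstoD(2)) auto
    ultimately show ?thesis
    proof eventually_elim
      case (elim n)
      have [measurable]: "Z n \<in> borel_measurable M" by (rule Z)
      define A where "A = {w\<in>space M. Z n w \<le> K}"
      define B where "B = {w\<in>space M. Z n w \<le> -K}"
      have [measurable]: "A \<in> sets M" "B \<in> sets M" unfolding A_def B_def by measurable
      have "measure M {w\<in>space M. K < \<bar>Z n w\<bar>} \<le> measure M ((space M - A) \<union> B)"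
        by (intro M.finite_measure_mono) (auto simp: A_def B_def)
      also have "\<dots> \<le> measure M (space M - A) + measure M B" by (intro measure_Un_le) auto
      also have "\<dots> = 1 - measure M A + measure M B" by (simp add: M.prob_compl)
      finally show ?case using elim cdf_distr_eq[OF Z] unfolding A_def B_def by simp
    qed
  qed
  then show ?thesis by (rule eventually_at_top_linorderI)
qed

lemma LS_error_bounded_in_prob:
  fixes C :: "real^'p::finite^'p"
  assumes "prob_space M" and e: "\<And>i. e i \<in> borel_measurable M"
    and C: "coercive_matrix C \<kappa>" and \<sigma>: "\<sigma> > 0"
    and clt: "\<And>t. t \<noteq> 0 \<Longrightarrow>
        weak_conv_m
          (\<lambda>n. distr M borel
                 (\<lambda>w. t \<bullet> (sqrt (real n) *\<^sub>R (matrix_inv (XtX X n) *v Xt_mult X n (\<lambda>i. e i w)))))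
          (density lborel (normal_density 0 (sqrt (\<sigma>\<^sup>2 * (t \<bullet> (matrix_inv C *v t))))))"
    and \<eta>: "\<eta> > 0"
  shows "\<forall>\<^sub>F K in at_top. \<forall>\<^sub>F n in sequentially.
           \<forall>j. measure M {w\<in>space M. K < \<bar>sqrt (real n) * LS_error X n (\<lambda>i. e i w) $ j\<bar>} \<le> \<eta>"
proof -
  have "\<forall>\<^sub>F K in at_top. \<forall>\<^sub>F n in sequentially.
          measure M {w\<in>space M. K < \<bar>sqrt (real n) * LS_error X n (\<lambda>i. e i w) $ j\<bar>} \<le> \<eta>" for j
  proof -
    define t :: "real^'p" where "t = axis j 1"
    define q where "q = matrix_inv C *v t"
    have "C *v q = t" unfolding q_def by (rule matrix_inv_cancel(1)[OF coercive_matrix_invertible[OF C]])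
    moreover have "t \<noteq> 0" unfolding t_def by simp
    ultimately have "q \<noteq> 0" and "t \<bullet> q = q \<bullet> (C *v q)" by (auto simp: inner_commute)
    moreover have "\<kappa> * (norm q)^2 \<le> q \<bullet> (C *v q)" and "\<kappa> > 0"
      using C unfolding coercive_matrix_def by blast+
    ultimately have "t \<bullet> q > 0" by (smt (verit) mult_pos_pos zero_less_norm_iff zero_less_power)
    then have sd: "sqrt (\<sigma>\<^sup>2 * (t \<bullet> (matrix_inv C *v t))) > 0" using \<sigma> unfolding q_def by simp
    have coord: "t \<bullet> (sqrt (real n) *\<^sub>R (matrix_inv (XtX X n) *v Xt_mult X n (\<lambda>i. e i w)))
        = sqrt (real n) * LS_error X n (\<lambda>i. e i w) $ j" for n w
      unfolding t_def LS_error_def by (simp add: inner_axis')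
    have "(\<lambda>w. sqrt (real n) * LS_error X n (\<lambda>i. e i w) $ j) \<in> borel_measurable M" for n
      using measurable_compose[OF borel_measurable_LS_error[OF e] borel_measurable_nth] by measurable
    from weak_conv_bounded_in_prob[where Z="\<lambda>n w. sqrt (real n) * LS_error X n (\<lambda>i. e i w) $ j",
        OF assms(1) this _ normal_density_real_distribution[OF sd] \<eta>]
    show ?thesis using clt[OF \<open>t \<noteq> 0\<close>] unfolding coord by blast
  qed
  then have "\<forall>\<^sub>F K in at_top. \<forall>j. \<forall>\<^sub>F n in sequentially.
          measure M {w\<in>space M. K < \<bar>sqrt (real n) * LS_error X n (\<lambda>i. e i w) $ j\<bar>} \<le> \<eta>"
    by (rule eventually_all_finite)
  then show ?thesis by eventually_elim (rule eventually_all_finite, blast)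
qed

lemma measure_all_abs_le_ge:
  fixes Z :: "'p::finite \<Rightarrow> 'w \<Rightarrow> real"
  assumes "prob_space M" and [measurable]: "\<And>j. Z j \<in> borel_measurable M"
    and tail: "\<And>j. measure M {w\<in>space M. K < \<bar>Z j w\<bar>} \<le> \<eta>"
  shows "1 - real CARD('p) * \<eta> \<le> measure M {w\<in>space M. \<forall>j. \<bar>Z j w\<bar> \<le> K}"
proof -
  interpret prob_space M by fact
  define A where "A = {w\<in>space M. \<forall>j. \<bar>Z j w\<bar> \<le> K}"
  have [measurable]: "A \<in> sets M" unfolding A_def by measurable
  have "space M - A = (\<Union>j. {w\<in>space M. K < \<bar>Z j w\<bar>})" unfolding A_def by (auto simp: not_le) (meson not_le)
  moreover have "measure M (\<Union>j. {w\<in>space M. K < \<bar>Z j w\<bar>})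
      \<le> (\<Sum>j\<in>UNIV. measure M {w\<in>space M. K < \<bar>Z j w\<bar>})"
    by (rule finite_measure_subadditive_finite) auto
  ultimately have "measure M (space M - A) \<le> (\<Sum>j\<in>UNIV. measure M {w\<in>space M. K < \<bar>Z j w\<bar>})"
    by simp
  also have "\<dots> \<le> real CARD('p) * \<eta>" using sum_mono[of UNIV _ "\<lambda>_. \<eta>", OF tail] by simp
  finally show ?thesis using prob_compl[of A] unfolding A_def by simp
qed

lemma lam_le_lam_star: "lam n j \<le> lam_star lam n"
  unfolding lam_star_def by (rule Max_ge) auto

definition AL_coverage ::
  "'w measure \<Rightarrow> (nat \<Rightarrow> 'w \<Rightarrow> real) \<Rightarrow> (nat \<Rightarrow> nat \<Rightarrow> 'p::finite \<Rightarrow> real) \<Rightarrow> (nat \<Rightarrow> 'p \<Rightarrow> real)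
    \<Rightarrow> (real^'p) set \<Rightarrow> nat \<Rightarrow> real^'p \<Rightarrow> real" where
  "AL_coverage M e X lam S n \<beta> = measure M {w \<in> space M.
     \<beta> \<in> minus_scaled (beta_AL X lam n (response X n \<beta> (\<lambda>i. e i w))) (sqrt (lam_star lam n / real n)) S}"

lemma AL_covers_if_LS_error_small:
  fixes X :: "nat \<Rightarrow> nat \<Rightarrow> 'p::finite \<Rightarrow> real" and C :: "real^'p^'p"
  assumes G: "coercive_matrix ((1 / real n) *\<^sub>R XtX X n) \<kappa>" and n: "n > 0"
    and lam: "\<And>j. lam n j > 0"
    and err: "\<And>j. \<bar>sqrt (real n) * LS_error X n eps $ j\<bar> \<le> K"
    and small: "\<And>j. lam n j / lam_star lam n
                  + perturbation_error (real CARD('p)) (sqrt (2 * real CARD('p) / \<kappa>))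
                      (real CARD('p) * K / sqrt (lam_star lam n)) (norm ((1 / real n) *\<^sub>R XtX X n - C))
                      (norm C)
                \<le> d * l0 j"
  shows "\<beta> \<in> minus_scaled (beta_AL X lam n (response X n \<beta> eps)) (sqrt (lam_star lam n / real n))
           (Mset C (\<lambda>j. d * l0 j) (\<lambda>j. ereal (\<psi> j)))"
proof -
  define p where "p = real CARD('p)"
  define H where "H = XtX X n"
  define ls where "ls = lam_star lam n"
  define c where "c = sqrt (ls / real n)"
  define \<delta> where "\<delta> = LS_error X n eps"
  have ls: "ls > 0" unfolding ls_def using lam[of undefined] lam_le_lam_star[of lam n undefined] by linarith
  have c: "c > 0" unfolding c_def using ls n by simp
  have S: "symmetric_matrix H" unfolding H_def by (rule symmetric_XtX)
  have H: "coercive_matrix H (real n * \<kappa>)"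
    using coercive_matrix_scaleR[OF G, of "real n"] n unfolding H_def by simp
  have "\<bar>\<delta> $ j\<bar> \<le> K / sqrt (real n)" for j
    using err[of j] n unfolding \<delta>_def by (auto simp: abs_mult field_simps)
  then have "norm \<delta> \<le> p * (K / sqrt (real n))"
    using norm_le_l1_cart[of \<delta>] sum_mono[of UNIV "\<lambda>j. \<bar>\<delta> $ j\<bar>" "\<lambda>_. K / sqrt (real n)"]
    unfolding p_def by simp
  then have "norm ((1/c) *\<^sub>R \<delta>) \<le> p * K / sqrt ls"
    using c n ls by (simp add: c_def real_sqrt_divide field_simps)
  then have "(1/c) *\<^sub>R (lasso H (\<beta> + \<delta>) (\<chi> j. lam n j / \<bar>(\<beta> + \<delta>)$j\<bar>) - \<beta>)
      \<in> {m. \<forall>j. m$j * (C *v m)$j \<le> d * l0 j}"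
    by (intro lasso_rescaled_constraints[where ls=ls and r="p * K / sqrt ls", OF S H])
      (use n ls lam lam_le_lam_star[of lam n] small in
        \<open>simp_all add: ls_def c_def p_def H_def less_imp_le\<close>)
  then have "\<beta> \<in> minus_scaled (lasso H (\<beta> + \<delta>) (\<chi> j. lam n j / \<bar>(\<beta> + \<delta>)$j\<bar>)) c
      {m. \<forall>j. m$j * (C *v m)$j \<le> d * l0 j}"
    by (simp add: minus_scaled_iff[OF c])
  then show ?thesis
    unfolding Mset_ereal c_def ls_def H_def \<delta>_def
    using beta_AL_eq_lasso[where lam=lam, OF coercive_matrix_invertible[OF H[unfolded H_def]]
        less_imp_le[OF lam]]
      beta_LS_response[OF coercive_matrix_invertible[OF H[unfolded H_def]]]
    by simp
qed

lemma AL_coverage_lower_bound: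
  fixes X :: "nat \<Rightarrow> nat \<Rightarrow> 'p::finite \<Rightarrow> real" and C :: "real^'p^'p"
  assumes "prob_space M" and e: "\<And>i. e i \<in> borel_measurable M"
    and G: "coercive_matrix ((1 / real n) *\<^sub>R XtX X n) \<kappa>" and n: "n > 0"
    and lam: "\<And>j. lam n j > 0"
    and tail: "\<And>j. measure M {w\<in>space M. K < \<bar>sqrt (real n) * LS_error X n (\<lambda>i. e i w) $ j\<bar>} \<le> \<eta>"
    and small: "\<And>j. lam n j / lam_star lam n
                  + perturbation_error (real CARD('p)) (sqrt (2 * real CARD('p) / \<kappa>))
                      (real CARD('p) * K / sqrt (lam_star lam n)) (norm ((1 / real n) *\<^sub>R XtX X n - C))
                      (norm C)
                \<le> d * l0 j"
  shows "1 - real CARD('p) * \<eta> \<le> AL_coverage M e X lam (Mset C (\<lambda>j. d * l0 j) (\<lambda>j. ereal (\<psi> j))) n \<beta>"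
proof -
  interpret M: prob_space M by fact
  define \<delta> where "\<delta> = (\<lambda>w. LS_error X n (\<lambda>i. e i w))"
  define c where "c = sqrt (lam_star lam n / real n)"
  define S where "S = Mset C (\<lambda>j. d * l0 j) (\<lambda>j. ereal (\<psi> j))"
  define good where "good = {w\<in>space M. \<forall>j. \<bar>sqrt (real n) * \<delta> w $ j\<bar> \<le> K}"
  define event where "event = {w\<in>space M. \<beta> \<in> minus_scaled (beta_AL X lam n (response X n \<beta> (\<lambda>i. e i w))) c S}"
  have \<delta>[measurable]: "\<delta> \<in> borel_measurable M" unfolding \<delta>_def by (rule borel_measurable_LS_error[OF e])
  have [measurable]: "(\<lambda>w. \<delta> w $ j) \<in> borel_measurable M" for j
    by (rule measurable_compose[OF \<delta> borel_measurable_nth])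
  have "1 - real CARD('p) * \<eta> \<le> measure M good"
    unfolding good_def
    by (rule measure_all_abs_le_ge[where Z="\<lambda>j w. sqrt (real n) * \<delta> w $ j", OF assms(1)])
      (simp, simp add: \<delta>_def tail)
  moreover have "good \<subseteq> event"
    unfolding good_def event_def c_def S_def \<delta>_def
    using AL_covers_if_LS_error_small[OF G n lam _ small] by blast
  moreover have "event \<in> sets M"
  proof -
    obtain \<kappa>' where H: "coercive_matrix (XtX X n) \<kappa>'"
      using coercive_matrix_scaleR[OF G, of "real n"] n by auto
    have "c > 0"
      using lam[of undefined] lam_le_lam_star[of lam n undefined] n unfolding c_def by simp
    with H have "event = {w\<in>space M. (1/c) *\<^sub>R (lasso (XtX X n) (\<beta> + \<delta> w)
        (\<chi> j. lam n j / \<bar>(\<beta> + \<delta> w)$j\<bar>) - \<beta>) \<in> {m. \<forall>j. m$j * (C *v m)$j \<le> d * l0 j}}"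
      unfolding event_def S_def Mset_ereal \<delta>_def
      by (intro AL_event_eq_lasso_event[OF coercive_matrix_invertible[OF H]] less_imp_le[OF lam])
    also have "\<dots> \<in> sets M"
      by (rule lasso_event_measurable[OF symmetric_XtX H closed_coordinate_quadratic_constraints])
        measurable
    finally show ?thesis .
  qed
  ultimately have "1 - real CARD('p) * \<eta> \<le> measure M event"
    using M.finite_measure_mono[of good event] by linarith
  then show ?thesis unfolding AL_coverage_def event_def c_def S_def .
qed

lemma perturbation_error_tendsto_zero:
  assumes "(r \<longlongrightarrow> 0) F" and "(\<Delta> \<longlongrightarrow> 0) F"
  shows "((\<lambda>x. perturbation_error p B (r x) (\<Delta> x) c) \<longlongrightarrow> 0) F"
proof -
  have "((\<lambda>x. perturbation_error p B (r x) (\<Delta> x) c) \<longlongrightarrow> perturbation_error p B 0 0 c) F"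
    unfolding perturbation_error_def by (intro tendsto_intros assms)
  then show ?thesis by (simp add: perturbation_error_def)
qed

lemma eventually_AL_coverage_ge:
  fixes X :: "nat \<Rightarrow> nat \<Rightarrow> 'p::finite \<Rightarrow> real" and C :: "real^'p^'p"
  assumes "prob_space M" and e: "\<And>i. e i \<in> borel_measurable M"
    and C: "coercive_matrix C \<kappa>" and XtX_lim: "(\<lambda>n. (1 / real n) *\<^sub>R XtX X n) \<longlonglongrightarrow> C"
    and bounded: "\<And>\<eta>. \<eta> > 0 \<Longrightarrow> \<forall>\<^sub>F K in at_top. \<forall>\<^sub>F n in sequentially.
           \<forall>j. measure M {w\<in>space M. K < \<bar>sqrt (real n) * LS_error X n (\<lambda>i. e i w) $ j\<bar>} \<le> \<eta>"
    and lam_pos: "\<And>n j. n \<ge> CARD('p) \<Longrightarrow> lam n j > 0"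
    and lam_star_inf: "filterlim (lam_star lam) at_top sequentially"
    and lam0_lim: "\<And>j. (\<lambda>n. lam n j / lam_star lam n) \<longlonglongrightarrow> lam0 j"
    and lam0_pos: "\<And>j. lam0 j > 0" and d: "d > 1" and \<epsilon>: "\<epsilon> > 0"
  shows "\<forall>\<^sub>F n in sequentially.
           \<forall>\<beta>. 1 - \<epsilon> \<le> AL_coverage M e X lam (Mset C (\<lambda>j. d * lam0 j) (\<lambda>j. ereal (\<psi> j))) n \<beta>"
proof -
  define p where "p = real CARD('p)"
  have p: "p > 0" unfolding p_def by simp
  have \<kappa>: "\<kappa> > 0" using C unfolding coercive_matrix_def by simp
  obtain K where tail: "\<forall>\<^sub>F n in sequentially.
      \<forall>j. measure M {w\<in>space M. K < \<bar>sqrt (real n) * LS_error X n (\<lambda>i. e i w) $ j\<bar>} \<le> \<epsilon> / p"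
    using eventually_happens'[OF _ bounded[of "\<epsilon> / p"]] \<epsilon> p by auto
  define \<Delta> where "\<Delta> = (\<lambda>n. norm ((1 / real n) *\<^sub>R XtX X n - C))"
  define r where "r = (\<lambda>n. p * K / sqrt (lam_star lam n))"
  define E where "E = (\<lambda>n. perturbation_error p (sqrt (2 * p / (\<kappa> / 2))) (r n) (\<Delta> n) (norm C))"
  have \<Delta>: "\<Delta> \<longlonglongrightarrow> 0"
    using tendsto_norm[OF tendsto_diff[OF XtX_lim tendsto_const[of C]]] unfolding \<Delta>_def by simp
  have "r \<longlonglongrightarrow> 0" unfolding r_def
    by (intro tendsto_divide_0[OF tendsto_const] filterlim_at_top_imp_at_infinity
        filterlim_compose[OF sqrt_at_top lam_star_inf])
  then have "E \<longlonglongrightarrow> 0" unfolding E_def using \<Delta> by (rule perturbation_error_tendsto_zero)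
  then have less: "\<forall>\<^sub>F n in sequentially. lam n j / lam_star lam n + E n < d * lam0 j" for j
    using lam0_pos[of j] d by (intro order_tendstoD(2)[OF tendsto_add[OF lam0_lim]]) auto
  have small: "\<forall>\<^sub>F n in sequentially. \<forall>j. lam n j / lam_star lam n + E n \<le> d * lam0 j"
  proof (rule eventually_all_finite)
    show "\<forall>\<^sub>F n in sequentially. lam n j / lam_star lam n + E n \<le> d * lam0 j" for j
      using less[of j] by (rule eventually_mono) simp
  qed
  have "\<forall>\<^sub>F n in sequentially. p * \<Delta> n < \<kappa> / 2"
    using order_tendstoD(2)[OF tendsto_mult_right_zero[OF \<Delta>, of p], of "\<kappa> / 2"] \<kappa> by simp
  then have near: "\<forall>\<^sub>F n in sequentially. p * \<Delta> n \<le> \<kappa> / 2" by (rule eventually_mono) simp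
  show ?thesis
    using tail small near eventually_ge_at_top[of "CARD('p)"]
  proof eventually_elim
    case (elim n)
    have "0 < CARD('p)" by simp
    then have n: "n > 0" using elim(4) by linarith
    have "coercive_matrix ((1 / real n) *\<^sub>R XtX X n) (\<kappa> / 2)"
      using coercive_matrix_near[OF C] elim(3) unfolding p_def \<Delta>_def by blast
    then have "1 - real CARD('p) * (\<epsilon> / p)
        \<le> AL_coverage M e X lam (Mset C (\<lambda>j. d * lam0 j) (\<lambda>j. ereal (\<psi> j))) n \<beta>" for \<beta>
      by (rule AL_coverage_lower_bound[where e=e and K=K, OF assms(1) e])
        (use elim lam_pos n in \<open>simp_all add: E_def r_def \<Delta>_def p_def\<close>)
    then show ?case using p unfolding p_def by simp
  qed
qed

lemma INF_tendsto_one: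
  fixes f :: "nat \<Rightarrow> 'a \<Rightarrow> real"
  assumes nonneg: "\<And>n x. 0 \<le> f n x" and le_one: "\<And>n x. f n x \<le> 1"
    and ev: "\<And>\<epsilon>. \<epsilon> > 0 \<Longrightarrow> \<forall>\<^sub>F n in sequentially. \<forall>x. 1 - \<epsilon> \<le> f n x"
  shows "(\<lambda>n. INF x. f n x) \<longlonglongrightarrow> 1"
proof (rule tendstoI)
  fix \<epsilon> :: real assume "\<epsilon> > 0"
  then have "\<forall>\<^sub>F n in sequentially. \<forall>x. 1 - \<epsilon> / 2 \<le> f n x" by (intro ev) simp
  then show "\<forall>\<^sub>F n in sequentially. dist (INF x. f n x) 1 < \<epsilon>"
  proof (rule eventually_mono)
    fix n assume "\<forall>x. 1 - \<epsilon> / 2 \<le> f n x"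
    then have lower: "1 - \<epsilon> / 2 \<le> (INF x. f n x)" by (intro cINF_greatest) auto
    have "bdd_below (range (f n))" using nonneg by (intro bdd_belowI2)
    then have "(INF x. f n x) \<le> f n x" for x by (rule cINF_lower) simp
    then have "(INF x. f n x) \<le> 1" using le_one order_trans by blast
    with lower show "dist (INF x. f n x) 1 < \<epsilon>" using \<open>\<epsilon> > 0\<close> by (simp add: dist_real_def)
  qed
qed

theorem mainTheorem13:
  fixes M :: "'w measure"
    and e :: "nat \<Rightarrow> 'w \<Rightarrow> real"
    and \<sigma> :: real
    and X :: "nat \<Rightarrow> nat \<Rightarrow> 'p::finite \<Rightarrow> real"
    and C :: "real^'p^'p"
    and lam :: "nat \<Rightarrow> 'p \<Rightarrow> real"
    and lam0 :: "'p \<Rightarrow> real"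
    and \<psi> :: "'p \<Rightarrow> real"
    and d :: real
  assumes prob: "prob_space M"
    and e_rv: "\<And>i. e i \<in> borel_measurable M"
    and e_indep: "prob_space.indep_vars M (\<lambda>_. borel) e UNIV"
    and e_ident: "\<And>i. distr M borel (e i) = distr M borel (e 0)"
    and e_sq_int: "integrable M (\<lambda>w. (e 0 w)\<^sup>2)"
    and e_mean: "prob_space.expectation M (e 0) = 0"
    and e_var: "prob_space.variance M (e 0) = \<sigma>\<^sup>2"
    and \<sigma>_pos: "\<sigma> > 0"
    and full_rank: "\<And>n b. n \<ge> CARD('p) \<Longrightarrow> (\<forall>i<n. X_mult X n b i = 0) \<Longrightarrow> b = 0"
    and XtX_lim: "(\<lambda>n. (1 / real n) *\<^sub>R XtX X n) \<longlonglongrightarrow> C"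
    and C_pd: "\<And>m. m \<noteq> 0 \<Longrightarrow> m \<bullet> (C *v m) > 0"
    and LS_clt: "\<And>t. t \<noteq> 0 \<Longrightarrow>
        weak_conv_m
          (\<lambda>n. distr M borel
                 (\<lambda>w. t \<bullet> (sqrt (real n) *\<^sub>R (matrix_inv (XtX X n) *v Xt_mult X n (\<lambda>i. e i w)))))
          (density lborel (normal_density 0 (sqrt (\<sigma>\<^sup>2 * (t \<bullet> (matrix_inv C *v t))))))"
    and LS_nonzero: "\<And>n \<beta> j. n \<ge> CARD('p) \<Longrightarrow>
        measure M {w \<in> space M. beta_LS X n (response X n \<beta> (\<lambda>i. e i w)) $ j = 0} = 0"
    and lam_pos: "\<And>n j. n \<ge> CARD('p) \<Longrightarrow> lam n j > 0"
    and lam_star_n: "(\<lambda>n. lam_star lam n / real n) \<longlonglongrightarrow> 0"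
    and lam_star_inf: "filterlim (lam_star lam) at_top sequentially"
    and lam0_lim: "\<And>j. (\<lambda>n. lam n j / lam_star lam n) \<longlonglongrightarrow> lam0 j"
    and psi_lim: "\<And>j. (\<lambda>n. sqrt (lam_star lam n) / lam n j) \<longlonglongrightarrow> \<psi> j"
    and lam0_range: "\<And>j. 0 < lam0 j \<and> lam0 j \<le> 1"
    and psi_nonneg: "\<And>j. \<psi> j \<ge> 0"
    and d_gt: "d > 1"
  shows "(\<lambda>n. INF \<beta>::real^'p.
            measure M {w \<in> space M.
              \<beta> \<in> minus_scaled (beta_AL X lam n (response X n \<beta> (\<lambda>i. e i w)))
                     (sqrt (lam_star lam n / real n))
                     (Mset C (\<lambda>j. d * lam0 j) (\<lambda>j. ereal (\<psi> j)))})
         \<longlonglongrightarrow> 1"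
proof -
  interpret M: prob_space M by (rule prob)
  obtain \<kappa> where C: "coercive_matrix C \<kappa>" using pos_def_coercive[OF C_pd] by blast
  let ?S = "Mset C (\<lambda>j. d * lam0 j) (\<lambda>j. ereal (\<psi> j))"
  have "(\<lambda>n. INF \<beta>. AL_coverage M e X lam ?S n \<beta>) \<longlonglongrightarrow> 1"
  proof (rule INF_tendsto_one)
    show "\<forall>\<^sub>F n in sequentially. \<forall>\<beta>. 1 - \<epsilon> \<le> AL_coverage M e X lam ?S n \<beta>" if "\<epsilon> > 0" for \<epsilon>
      using eventually_AL_coverage_ge[OF prob e_rv C XtX_lim
          LS_error_bounded_in_prob[OF prob e_rv C \<sigma>_pos LS_clt] lam_pos lam_star_inf lam0_lim
          conjunct1[OF lam0_range] d_gt that] .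
  qed (simp_all add: AL_coverage_def M.prob_le_1)
  then show ?thesis unfolding AL_coverage_def .
qed

end
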